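(* Let $G$ be a finite abelian group, let $\rho\in[2,\operatorname{diam}^+(G)]$, and let $A$ be a $\rho$-maximal subset of $G$. Then $\pi(A)=\pi(\langle A\rangle^+_\tau)$ for every $\tau\in[1,\rho-1]$.
   Context: Groups are written additively. For $A\subseteq G$ let $A_0:=A\cup\{0\}$ and $\langle A\rangle^+_\tau:=\tau A_0=\{a_1+\dots+a_\tau:a_i\in A_0\}$. $\operatorname{diam}^+_A(G):=\min\{\rho\in\mathbb{N}_0:\langle A\rangle^+_\rho=G\}$ ($\min\varnothing=\infty$); $\operatorname{diam}^+(G):=\max\{\operatorname{diam}^+_A(G):\langle A\rangle=G\}$. The period of $S\subseteq G$ is $\pi(S):=\{g\in G:S+g=S\}$. A subset $A\subseteq G$ is $\rho$-maximal if it is maximal under inclusion subject to $\operatorname{diam}^+_A(G)\ge\rho$, i.e. subject to $\langle A\rangle^+_{\rho-1}\neq G$. *)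

theory Defs
  imports Main "HOL-Library.Extended_Nat"
begin

text \<open>The ambient finite abelian group G is the type 'a :: {ab_group_add, finite}.\<close>

definition zero_ins :: "'a::ab_group_add set \<Rightarrow> 'a set" where
  "zero_ins A = insert 0 A"

definition sumset_plus :: "nat \<Rightarrow> 'a::ab_group_add set \<Rightarrow> 'a set" where
  "sumset_plus \<tau> A = {sum_list xs | xs. length xs = \<tau> \<and> set xs \<subseteq> zero_ins A}"

definition gen_subgroup :: "'a::ab_group_add set \<Rightarrow> 'a set" where
  "gen_subgroup A = \<Inter>{H. A \<subseteq> H \<and> 0 \<in> H \<and> (\<forall>x\<in>H. \<forall>y\<in>H. x + y \<in> H) \<and> (\<forall>x\<in>H. - x \<in> H)}"

definition diamA :: "'a::ab_group_add set \<Rightarrow> enat" where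
  "diamA A = (if \<exists>\<rho>. sumset_plus \<rho> A = UNIV
              then enat (LEAST \<rho>. sumset_plus \<rho> A = UNIV) else \<infinity>)"

definition diam_plus :: "'a::ab_group_add itself \<Rightarrow> enat" where
  "diam_plus _ = Sup {diamA (A::'a set) | A. gen_subgroup A = UNIV}"

definition period :: "'a::ab_group_add set \<Rightarrow> 'a set" where
  "period S = {g. (\<lambda>s. s + g) ` S = S}"

definition rho_maximal :: "nat \<Rightarrow> 'a::ab_group_add set \<Rightarrow> bool" where
  "rho_maximal \<rho> A \<longleftrightarrow> enat \<rho> \<le> diamA A \<and> (\<forall>B. A \<subset> B \<longrightarrow> \<not> enat \<rho> \<le> diamA B)"

end

theory Submission
  imports Defs
begin

(* Write S_t for the t-fold restricted sumset t A_0.  Three facts drive the proof.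
   (1) Periods only grow along the chain S_0, S_1, S_2, ...: a period of X is a period of
       Y + X, and S_(t+1) = A_0 + S_t.
   (2) Adjoining a translate of A by a period g of S_m does not change S_m:
       the m-fold sumset of A u (A + g) equals S_m, since each of its elements is an element
       of S_m shifted by a sum of copies of g, i.e. by a period of S_m.
   (3) diam_A(G) >= rho  iff  S_(rho-1) is not all of G.
   For a rho-maximal A, (2) and (3) show that A u (A + g) still has diameter >= rho whenever
   g is a period of S_(rho-1); maximality forces A + g = A, so g is a period of A.  Maximality
   also forces 0 in A, hence S_tau = A + S_(tau-1) for tau >= 1 and period A <= period S_tau
   by (1).  Combining with (1) once more, period S_tau <= period S_(rho-1) <= period A. *)

definition minkowski_sum :: "'a::ab_group_add set \<Rightarrow> 'a set \<Rightarrow> 'a set" where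
  "minkowski_sum X Y = {x + y | x y. x \<in> X \<and> y \<in> Y}"

lemma minkowski_sum_commute: "minkowski_sum X Y = minkowski_sum Y X"
  unfolding minkowski_sum_def using add.commute by blast

lemma zero_in_period: "0 \<in> period S"
  unfolding period_def by simp

lemma period_add:
  assumes "g \<in> period S" "h \<in> period S"
  shows "g + h \<in> period S"
proof -
  have "(\<lambda>s. s + (g + h)) ` S = (\<lambda>s. s + h) ` ((\<lambda>s. s + g) ` S)"
    by (simp add: image_image add.assoc)
  then show ?thesis using assms unfolding period_def by simp
qed

lemma add_period_mem: "x \<in> S \<Longrightarrow> h \<in> period S \<Longrightarrow> x + h \<in> S"
  unfolding period_def by blast

lemma minkowski_sum_period_subset: "minkowski_sum S (period S) \<subseteq> S"
  unfolding minkowski_sum_def using add_period_mem by blast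

lemma period_iff:
  fixes S :: "'a::{ab_group_add, finite} set"
  shows "g \<in> period S \<longleftrightarrow> (\<forall>x\<in>S. x + g \<in> S)"
proof
  assume "\<forall>x\<in>S. x + g \<in> S"
  then have sub: "(\<lambda>s. s + g) ` S \<subseteq> S" by blast
  have "card ((\<lambda>s. s + g) ` S) = card S"
    by (rule card_image) (simp add: inj_on_def)
  with sub show "g \<in> period S"
    unfolding period_def by (simp add: card_subset_eq)
qed (simp add: add_period_mem)

lemma period_subset_minkowski_sum:
  fixes X Y :: "'a::{ab_group_add, finite} set"
  shows "period X \<subseteq> period (minkowski_sum Y X)"
proof
  fix g assume g: "g \<in> period X"
  show "g \<in> period (minkowski_sum Y X)"
    unfolding period_iff
  proof
    fix z assume "z \<in> minkowski_sum Y X"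
    then obtain y x where "z = y + x" "y \<in> Y" "x \<in> X"
      unfolding minkowski_sum_def by blast
    moreover have "x + g \<in> X" using \<open>x \<in> X\<close> g by (rule add_period_mem)
    ultimately show "z + g \<in> minkowski_sum Y X"
      unfolding minkowski_sum_def by (metis (mono_tags, lifting) CollectI add.assoc)
  qed
qed

lemma sumset_plus_0: "sumset_plus 0 A = {0}"
  unfolding sumset_plus_def by auto

lemma sumset_plus_Suc:
  "sumset_plus (Suc n) A = minkowski_sum (zero_ins A) (sumset_plus n A)"
proof
  show "sumset_plus (Suc n) A \<subseteq> minkowski_sum (zero_ins A) (sumset_plus n A)"
  proof
    fix x assume "x \<in> sumset_plus (Suc n) A"
    then obtain xs where xs: "x = sum_list xs" "length xs = Suc n" "set xs \<subseteq> zero_ins A"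
      unfolding sumset_plus_def by auto
    then obtain y ys where "xs = y # ys" by (cases xs) auto
    with xs show "x \<in> minkowski_sum (zero_ins A) (sumset_plus n A)"
      unfolding sumset_plus_def minkowski_sum_def by auto
  qed
next
  show "minkowski_sum (zero_ins A) (sumset_plus n A) \<subseteq> sumset_plus (Suc n) A"
  proof
    fix x assume "x \<in> minkowski_sum (zero_ins A) (sumset_plus n A)"
    then obtain a ys where "x = a + sum_list ys" "a \<in> zero_ins A" "length ys = n"
        "set ys \<subseteq> zero_ins A"
      unfolding sumset_plus_def minkowski_sum_def by auto
    then show "x \<in> sumset_plus (Suc n) A"
      unfolding sumset_plus_def by (intro CollectI exI[of _ "a # ys"]) auto
  qed
qed

text \<open>Since 0 may always be used as a summand, the sumsets form an increasing chain.\<close>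

lemma sumset_plus_mono:
  assumes "n \<le> m"
  shows "sumset_plus n A \<subseteq> sumset_plus m A"
proof -
  have "sumset_plus k A \<subseteq> sumset_plus (Suc k) A" for k
  proof
    fix x assume "x \<in> sumset_plus k A"
    moreover have "(0::'a) \<in> zero_ins A" by (simp add: zero_ins_def)
    ultimately show "x \<in> sumset_plus (Suc k) A"
      unfolding sumset_plus_Suc minkowski_sum_def by force
  qed
  then show ?thesis using lift_Suc_mono_le[of "\<lambda>k. sumset_plus k A"] assms by blast
qed

lemma sumset_plus_mono_set: "A \<subseteq> B \<Longrightarrow> sumset_plus n A \<subseteq> sumset_plus n B"
  unfolding sumset_plus_def zero_ins_def by blast

lemma sumset_plus_insert_zero: "sumset_plus n (insert 0 A) = sumset_plus n A"
  unfolding sumset_plus_def zero_ins_def by simp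

lemma period_sumset_plus_mono:
  fixes A :: "'a::{ab_group_add, finite} set"
  assumes "t \<le> m"
  shows "period (sumset_plus t A) \<subseteq> period (sumset_plus m A)"
  using lift_Suc_mono_le[of "\<lambda>k. period (sumset_plus k A)"] assms
  by (simp add: sumset_plus_Suc period_subset_minkowski_sum)

lemma period_subset_period_sumset_plus:
  fixes A :: "'a::{ab_group_add, finite} set"
  assumes "0 \<in> A"
  shows "period A \<subseteq> period (sumset_plus (Suc n) A)"
proof -
  have "zero_ins A = A" using assms by (auto simp: zero_ins_def)
  then show ?thesis
    by (simp add: sumset_plus_Suc minkowski_sum_commute[of A] period_subset_minkowski_sum)
qed

text \<open>Fact (2): translating A by a period g of its m-fold sumset adds nothing to that sumset.
  Every m-fold sum from A \<union> (A + g) is an m-fold sum from A plus a sum of copies of g.\<close>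

lemma sumset_plus_union_translate:
  assumes g: "g \<in> period (sumset_plus m A)"
  shows "sumset_plus m (A \<union> (\<lambda>a. a + g) ` A) = sumset_plus m A"
proof
  let ?B = "A \<union> (\<lambda>a. a + g) ` A" and ?P = "period (sumset_plus m A)"
  have shifted: "sumset_plus k ?B \<subseteq> minkowski_sum (sumset_plus k A) ?P" for k
  proof (induction k)
    case 0
    then show ?case
      using zero_in_period by (force simp: sumset_plus_0 minkowski_sum_def)
  next
    case (Suc k)
    show ?case
    proof
      fix x assume "x \<in> sumset_plus (Suc k) ?B"
      then obtain b y h where x: "x = b + (y + h)" and b: "b \<in> zero_ins ?B"
          and y: "y \<in> sumset_plus k A" and h: "h \<in> ?P"
        using Suc.IH unfolding sumset_plus_Suc minkowski_sum_def by blast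
      have "\<exists>a\<in>zero_ins A. \<exists>j\<in>?P. b = a + j"
      proof (cases "b \<in> zero_ins A")
        case True
        have "b = b + 0" by simp
        with True show ?thesis using zero_in_period by blast
      next
        case False
        then obtain a where "a \<in> A" "b = a + g" using b by (auto simp: zero_ins_def)
        then show ?thesis using g by (auto simp: zero_ins_def)
      qed
      then obtain a j where a: "a \<in> zero_ins A" and j: "j \<in> ?P" and "b = a + j" by blast
      then have "x = (a + y) + (j + h)" using x by (simp add: ac_simps)
      moreover have "a + y \<in> sumset_plus (Suc k) A"
        using a y unfolding sumset_plus_Suc minkowski_sum_def by blast
      moreover have "j + h \<in> ?P" using j h by (rule period_add)
      ultimately show "x \<in> minkowski_sum (sumset_plus (Suc k) A) ?P"
        unfolding minkowski_sum_def by blast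
    qed
  qed
  show "sumset_plus m ?B \<subseteq> sumset_plus m A"
    using shifted[of m] minkowski_sum_period_subset by blast
qed (rule sumset_plus_mono_set, blast)

lemma diamA_ge_iff:
  assumes "1 \<le> \<rho>"
  shows "enat \<rho> \<le> diamA A \<longleftrightarrow> sumset_plus (\<rho> - 1) A \<noteq> UNIV"
proof
  assume le: "enat \<rho> \<le> diamA A"
  show "sumset_plus (\<rho> - 1) A \<noteq> UNIV"
  proof
    assume full: "sumset_plus (\<rho> - 1) A = UNIV"
    then have "diamA A = enat (LEAST r. sumset_plus r A = UNIV)"
      unfolding diamA_def by auto
    moreover have "(LEAST r. sumset_plus r A = UNIV) \<le> \<rho> - 1"
      using full by (rule Least_le)
    ultimately show False using le assms by auto
  qed
next
  assume proper: "sumset_plus (\<rho> - 1) A \<noteq> UNIV"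
  show "enat \<rho> \<le> diamA A"
  proof (cases "\<exists>r. sumset_plus r A = UNIV")
    case True
    define l where "l = (LEAST r. sumset_plus r A = UNIV)"
    have full: "sumset_plus l A = UNIV" unfolding l_def using True by (rule LeastI_ex)
    have "\<rho> \<le> l"
    proof (rule ccontr)
      assume "\<not> \<rho> \<le> l"
      then have "sumset_plus l A \<subseteq> sumset_plus (\<rho> - 1) A" by (intro sumset_plus_mono) simp
      with full proper show False by auto
    qed
    then show ?thesis unfolding diamA_def using True l_def by simp
  qed (simp add: diamA_def)
qed

text \<open>A \<rho>-maximal set contains 0, since adjoining 0 leaves all sumsets, hence the diameter,
  unchanged.\<close>

lemma rho_maximal_zero:
  assumes "rho_maximal \<rho> A"
  shows "0 \<in> A"
proof (rule ccontr)
  assume "0 \<notin> A"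
  then have "A \<subset> insert 0 A" by auto
  moreover have "diamA (insert 0 A) = diamA A"
    unfolding diamA_def sumset_plus_insert_zero ..
  ultimately show False using assms unfolding rho_maximal_def by metis
qed

text \<open>Every period of the (\<rho> - 1)-fold sumset of a \<rho>-maximal set is a period of the set itself:
  adjoining the translate A + g keeps the diameter \<ge> \<rho>, so by maximality A + g = A.\<close>

lemma rho_maximal_period:
  fixes A :: "'a::{ab_group_add, finite} set"
  assumes max: "rho_maximal \<rho> A" and "1 \<le> \<rho>"
    and g: "g \<in> period (sumset_plus (\<rho> - 1) A)"
  shows "g \<in> period A"
proof -
  define B where "B = A \<union> (\<lambda>a. a + g) ` A"
  have "sumset_plus (\<rho> - 1) B = sumset_plus (\<rho> - 1) A"
    unfolding B_def using g by (rule sumset_plus_union_translate)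
  then have "enat \<rho> \<le> diamA B"
    using max \<open>1 \<le> \<rho>\<close> by (simp add: diamA_ge_iff rho_maximal_def)
  then have "\<not> A \<subset> B" using max unfolding rho_maximal_def by blast
  then have "B = A" unfolding B_def by blast
  then show ?thesis unfolding period_iff B_def by blast
qed

theorem lemma5p1:
  fixes A :: "'a::{ab_group_add, finite} set" and \<rho> :: nat
  assumes "2 \<le> \<rho>" and "enat \<rho> \<le> diam_plus TYPE('a)"
    and "rho_maximal \<rho> A"
  shows "\<forall>\<tau>\<in>{1..\<rho> - 1}. period A = period (sumset_plus \<tau> A)"
proof
  fix \<tau> assume \<tau>: "\<tau> \<in> {1..\<rho> - 1}"
  then obtain n where n: "\<tau> = Suc n" by (cases \<tau>) auto
  have "period A \<subseteq> period (sumset_plus \<tau> A)"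
    unfolding n using rho_maximal_zero[OF assms(3)] by (rule period_subset_period_sumset_plus)
  moreover have "period (sumset_plus \<tau> A) \<subseteq> period A"
  proof
    fix g assume "g \<in> period (sumset_plus \<tau> A)"
    then have "g \<in> period (sumset_plus (\<rho> - 1) A)"
      using period_sumset_plus_mono[of \<tau> "\<rho> - 1" A] \<tau> by auto
    then show "g \<in> period A"
      using rho_maximal_period[OF assms(3)] assms(1) by simp
  qed
  ultimately show "period A = period (sumset_plus \<tau> A)" ..
qed

end
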